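(* Let $q,M,j,y$ be positive integers with $M,j\in[1,q]$ and $y\in[j,q]$. Then $$|\{a\in[0,M-1]\cap\mathbb{Z}: y-j\le (aj)_q<y\}|=\lfloor Mj/q\rfloor+\chi\big(y\le (Mj)_q\big).$$
   Context: For an integer $\ell$, $(\ell)_q$ denotes the least nonnegative residue of $\ell$ modulo $q$. For an inequality $Q$, $\chi(Q)$ equals $1$ if $Q$ is true and $0$ if $Q$ is false. *)

theory Defs
  imports Main
begin

end

theory Submission
  imports Defs
begin

text \<open>Put \<open>F n = n div q + [y \<le> n mod q]\<close>. Adding \<open>j \<le> q\<close> to \<open>n\<close> with residue \<open>r\<close>
  either keeps the quotient and moves the residue to \<open>r + j\<close>, or raises the quotient by one and
  moves the residue to \<open>r + j - q < j \<le> y\<close>; in both cases \<open>F\<close> grows by exactly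
  \<open>[y - j \<le> r < y]\<close>. Telescoping \<open>F\<close> along \<open>n = 0, j, 2j, \<dots>, M j\<close> therefore counts the
  \<open>a < M\<close> whose residue \<open>a j mod q\<close> lies in the window \<open>[y - j, y)\<close>, and \<open>F 0 = 0\<close> as \<open>y > 0\<close>.\<close>

lemma div_add_threshold_step:
  fixes n q j y :: nat
  assumes "0 < q" and "j \<le> y" and "y \<le> q"
  shows "(n + j) div q + of_bool (y \<le> (n + j) mod q)
       = n div q + of_bool (y \<le> n mod q) + of_bool (y - j \<le> n mod q \<and> n mod q < y)"
proof -
  define r where "r = n mod q"
  have "r < q"
    using \<open>0 < q\<close> by (simp add: r_def)
  have decomp: "n + j = (r + j) + n div q * q"
    by (simp add: r_def)
  have div_eq: "(n + j) div q = n div q + (r + j) div q"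
    using \<open>0 < q\<close> by (subst decomp) simp
  have mod_eq: "(n + j) mod q = (r + j) mod q"
    by (subst decomp) simp
  show ?thesis
  proof (cases "r + j < q")
    case True
    then show ?thesis
      using \<open>j \<le> y\<close> by (auto simp: div_eq mod_eq r_def[symmetric])
  next
    case False
    then have "(r + j) div q = 1" and "(r + j) mod q = r + j - q"
      using \<open>r < q\<close> \<open>j \<le> y\<close> \<open>y \<le> q\<close> by (simp_all add: div_if mod_if)
    then show ?thesis
      using False \<open>r < q\<close> \<open>j \<le> y\<close> \<open>y \<le> q\<close> by (auto simp: div_eq mod_eq r_def[symmetric])
  qed
qed

lemma card_residues_in_window:
  fixes q M j y :: nat
  assumes "0 < q" and "0 < y" and "j \<le> y" and "y \<le> q"
  shows "card {a \<in> {..<M}. y - j \<le> (a * j) mod q \<and> (a * j) mod q < y}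
       = (M * j) div q + of_bool (y \<le> (M * j) mod q)"
proof (induction M)
  case 0
  show ?case
    using \<open>0 < y\<close> by simp
next
  case (Suc M)
  let ?hit = "\<lambda>a. y - j \<le> (a * j) mod q \<and> (a * j) mod q < y"
  have "{a \<in> {..<Suc M}. ?hit a} = (if ?hit M then insert M else id) {a \<in> {..<M}. ?hit a}"
    by (auto simp: lessThan_Suc)
  then have "card {a \<in> {..<Suc M}. ?hit a} = card {a \<in> {..<M}. ?hit a} + of_bool (?hit M)"
    by simp
  also have "\<dots> = (Suc M * j) div q + of_bool (y \<le> (Suc M * j) mod q)"
    using Suc.IH div_add_threshold_step[OF \<open>0 < q\<close> \<open>j \<le> y\<close> \<open>y \<le> q\<close>, of "M * j"]
    by (simp add: add.commute)
  finally show ?case .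
qed

theorem lemma7p1:
  fixes q M j y :: nat
  assumes "0 < q" and "1 \<le> M" and "M \<le> q" and "1 \<le> j" and "j \<le> q"
    and "j \<le> y" and "y \<le> q"
  shows "card {a \<in> {0..M-1}. y - j \<le> (a * j) mod q \<and> (a * j) mod q < y}
         = (M * j) div q + (if y \<le> (M * j) mod q then 1 else 0)"
proof -
  have "{0..M-1} = {..<M}"
    using \<open>1 \<le> M\<close> by auto
  moreover have "0 < y"
    using \<open>1 \<le> j\<close> \<open>j \<le> y\<close> by simp
  ultimately show ?thesis
    using card_residues_in_window[OF \<open>0 < q\<close> _ \<open>j \<le> y\<close> \<open>y \<le> q\<close>, of M] by simp
qed

end
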